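(* Let $A=(A,\wedge,\vee,\cdot,\to,1)$ be a $\mathsf{DLCMI}$ and $a,b\in A$. Then $(a,b)\in R(a,b)$, and $R(a,b)$ is a congruence of the lattice reduct $(A,\wedge,\vee)$ of $A$.
   Context: An algebra $(A,\wedge,\vee,\cdot,\to,1)$ of type $(2,2,2,2,0)$ is a $\mathsf{DLCMI}$ if for all $a,b,c\in A$: (1) $(A,\wedge,\vee)$ is a distributive lattice; (2) $1$ is its largest element; (3) $(A,\cdot,1)$ is a commutative monoid; (4) $(a\to b)\wedge(a\to c)=a\to(b\wedge c)$; (5) $(a\to c)\wedge(b\to c)=(a\vee b)\to c$; (6) $a\to a=1$; (7) $(a\vee b)\cdot c=(a\cdot c)\vee(b\cdot c)$; (8) $(a\to b)\cdot(b\to c)\le a\to c$; (9) $a\to b\le (a\cdot c)\to(b\cdot c)$. Notation: $x^0=1$, $x^{m}=x\cdot x^{m-1}$; $\square(x)=1\to x$, $\square^0(x)=x$, $\square^{m}$ the $m$-fold iterate; $x\leftrightarrow y=(x\to y)\wedge(y\to x)$; $t_n(a,b)=\square^0(a\leftrightarrow b)\wedge\square(a\leftrightarrow b)\wedge\cdots\wedge\square^n(a\leftrightarrow b)$; $t_n^k(a,b)=(t_n(a,b))^k$. $R(a,b)$ is the binary relation on $A$ with $(c,d)\in R(a,b)$ iff there exist natural numbers $n,k$ such that (C1) $t_n^k(a,b)\cdot(c\wedge a\wedge b)\le d\wedge a\wedge b$ and $t_n^k(a,b)\cdot(d\wedge a\wedge b)\le c\wedge a\wedge b$; (C2) $t_n^k(a,b)\cdot(c\vee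 a\vee b)\le d\vee a\vee b$ and $t_n^k(a,b)\cdot(d\vee a\vee b)\le c\vee a\vee b$; (C3) $t_n^k(a,b)\le c\leftrightarrow d$. *)

theory Defs
  imports Main
begin

definition lat_le :: "('a \<Rightarrow> 'a \<Rightarrow> 'a) \<Rightarrow> 'a \<Rightarrow> 'a \<Rightarrow> bool" where
  "lat_le meet x y \<longleftrightarrow> meet x y = x"

definition DLCMI :: "('a \<Rightarrow> 'a \<Rightarrow> 'a) \<Rightarrow> ('a \<Rightarrow> 'a \<Rightarrow> 'a) \<Rightarrow> ('a \<Rightarrow> 'a \<Rightarrow> 'a)
     \<Rightarrow> ('a \<Rightarrow> 'a \<Rightarrow> 'a) \<Rightarrow> 'a \<Rightarrow> bool" where
  "DLCMI meet join mult imp one \<longleftrightarrow>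
     \<comment> \<open>(1) distributive lattice\<close>
     (\<forall>x y. meet x y = meet y x) \<and> (\<forall>x y. join x y = join y x) \<and>
     (\<forall>x y z. meet (meet x y) z = meet x (meet y z)) \<and>
     (\<forall>x y z. join (join x y) z = join x (join y z)) \<and>
     (\<forall>x y. meet x (join x y) = x) \<and> (\<forall>x y. join x (meet x y) = x) \<and>
     (\<forall>x y z. meet x (join y z) = join (meet x y) (meet x z)) \<and>
     \<comment> \<open>(2) one is the largest element\<close>
     (\<forall>x. lat_le meet x one) \<and>
     \<comment> \<open>(3) commutative monoid\<close>
     (\<forall>x y z. mult (mult x y) z = mult x (mult y z)) \<and>
     (\<forall>x y. mult x y = mult y x) \<and> (\<forall>x. mult x one = x) \<and>
     \<comment> \<open>(4)\<close>
     (\<forall>a b c. meet (imp a b) (imp a c) = imp a (meet b c)) \<and>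
     \<comment> \<open>(5)\<close>
     (\<forall>a b c. meet (imp a c) (imp b c) = imp (join a b) c) \<and>
     \<comment> \<open>(6)\<close>
     (\<forall>a. imp a a = one) \<and>
     \<comment> \<open>(7)\<close>
     (\<forall>a b c. mult (join a b) c = join (mult a c) (mult b c)) \<and>
     \<comment> \<open>(8)\<close>
     (\<forall>a b c. lat_le meet (mult (imp a b) (imp b c)) (imp a c)) \<and>
     \<comment> \<open>(9)\<close>
     (\<forall>a b c. lat_le meet (imp a b) (imp (mult a c) (mult b c)))"

primrec mpow :: "('a \<Rightarrow> 'a \<Rightarrow> 'a) \<Rightarrow> 'a \<Rightarrow> 'a \<Rightarrow> nat \<Rightarrow> 'a" where
  "mpow mult one x 0 = one"
| "mpow mult one x (Suc m) = mult x (mpow mult one x m)"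

primrec boxn :: "('a \<Rightarrow> 'a \<Rightarrow> 'a) \<Rightarrow> 'a \<Rightarrow> nat \<Rightarrow> 'a \<Rightarrow> 'a" where
  "boxn imp one 0 x = x"
| "boxn imp one (Suc m) x = imp one (boxn imp one m x)"

definition biimp :: "('a \<Rightarrow> 'a \<Rightarrow> 'a) \<Rightarrow> ('a \<Rightarrow> 'a \<Rightarrow> 'a) \<Rightarrow> 'a \<Rightarrow> 'a \<Rightarrow> 'a" where
  "biimp meet imp x y = meet (imp x y) (imp y x)"

primrec tn :: "('a \<Rightarrow> 'a \<Rightarrow> 'a) \<Rightarrow> ('a \<Rightarrow> 'a \<Rightarrow> 'a) \<Rightarrow> 'a \<Rightarrow> nat \<Rightarrow> 'a \<Rightarrow> 'a \<Rightarrow> 'a" where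
  "tn meet imp one 0 a b = biimp meet imp a b"
| "tn meet imp one (Suc n) a b =
     meet (tn meet imp one n a b) (boxn imp one (Suc n) (biimp meet imp a b))"

definition tnk :: "('a \<Rightarrow> 'a \<Rightarrow> 'a) \<Rightarrow> ('a \<Rightarrow> 'a \<Rightarrow> 'a) \<Rightarrow> ('a \<Rightarrow> 'a \<Rightarrow> 'a) \<Rightarrow> 'a
     \<Rightarrow> nat \<Rightarrow> nat \<Rightarrow> 'a \<Rightarrow> 'a \<Rightarrow> 'a" where
  "tnk meet mult imp one n k a b = mpow mult one (tn meet imp one n a b) k"

definition Rrel :: "('a \<Rightarrow> 'a \<Rightarrow> 'a) \<Rightarrow> ('a \<Rightarrow> 'a \<Rightarrow> 'a) \<Rightarrow> ('a \<Rightarrow> 'a \<Rightarrow> 'a)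
     \<Rightarrow> ('a \<Rightarrow> 'a \<Rightarrow> 'a) \<Rightarrow> 'a \<Rightarrow> 'a \<Rightarrow> 'a \<Rightarrow> ('a \<times> 'a) set" where
  "Rrel meet join mult imp one a b = {(c, d). \<exists>n k.
     (let t = tnk meet mult imp one n k a b; ab = meet a b; aob = join a b in
       lat_le meet (mult t (meet c ab)) (meet d ab) \<and>
       lat_le meet (mult t (meet d ab)) (meet c ab) \<and>
       lat_le meet (mult t (join c aob)) (join d aob) \<and>
       lat_le meet (mult t (join d aob)) (join c aob) \<and>
       lat_le meet t (biimp meet imp c d))}"

definition lattice_congruence :: "('a \<Rightarrow> 'a \<Rightarrow> 'a) \<Rightarrow> ('a \<Rightarrow> 'a \<Rightarrow> 'a) \<Rightarrow> ('a \<times> 'a) set \<Rightarrow> bool" where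
  "lattice_congruence meet join R \<longleftrightarrow> equiv UNIV R \<and>
     (\<forall>x y u v. (x, y) \<in> R \<and> (u, v) \<in> R \<longrightarrow>
        (meet x u, meet y v) \<in> R \<and> (join x u, join y v) \<in> R)"

end

theory Submission
  imports Defs
begin

text \<open>Say that \<open>t\<close> transfers \<open>c\<close> to \<open>d\<close> relative to \<open>p\<close>, \<open>q\<close> if
  \<open>t \<cdot> (c \<and> p) \<le> d \<and> p\<close>, \<open>t \<cdot> (c \<or> q) \<le> d \<or> q\<close> and \<open>t \<le> c \<rightarrow> d\<close>; thus \<open>(c, d) \<in> R(a, b)\<close>
  iff some \<open>t\<^sub>n\<^sup>k(a, b)\<close> transfers \<open>c\<close> to \<open>d\<close> and back relative to \<open>a \<and> b\<close>, \<open>a \<or> b\<close>.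
  As multiplication is monotone, below both factors and distributive over joins, the
  lattice is distributive, and \<open>\<rightarrow>\<close> satisfies (4), (5) and (8), transfers with witnesses
  \<open>s\<close> and \<open>u\<close> compose along chains, meets and joins to a transfer with witness \<open>s \<cdot> u\<close>,
  and any smaller element is again a witness. So every set of witnesses that contains \<open>1\<close>
  and bounds each product of two of its members from below defines a lattice congruence.
  The powers \<open>t\<^sub>n\<^sup>k(a, b)\<close> form such a set because \<open>t\<^sub>n(a, b)\<close> decreases in \<open>n\<close>, and
  \<open>t\<^sub>0(a, b) = a \<leftrightarrow> b\<close> transfers \<open>a\<close> to \<open>b\<close> and back.\<close>

locale dlcmi =
  fixes meet join mult imp :: "'a \<Rightarrow> 'a \<Rightarrow> 'a" and one :: 'a
  assumes DLCMI: "DLCMI meet join mult imp one"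
begin

abbreviation le :: "'a \<Rightarrow> 'a \<Rightarrow> bool" where
  "le \<equiv> lat_le meet"

lemma meet_commute: "meet x y = meet y x"
  and join_commute: "join x y = join y x"
  and meet_assoc: "meet (meet x y) z = meet x (meet y z)"
  and join_assoc: "join (join x y) z = join x (join y z)"
  and meet_join_absorb: "meet x (join x y) = x"
  and join_meet_absorb: "join x (meet x y) = x"
  and meet_join_distrib: "meet x (join y z) = join (meet x y) (meet x z)"
  and le_one: "le x one"
  and mult_assoc: "mult (mult x y) z = mult x (mult y z)"
  and mult_commute: "mult x y = mult y x"
  and mult_one: "mult x one = x"
  and imp_meet: "meet (imp x y) (imp x z) = imp x (meet y z)"
  and imp_join: "meet (imp x z) (imp y z) = imp (join x y) z"
  and imp_self: "imp x x = one"
  and mult_join_distrib: "mult (join x y) z = join (mult x z) (mult y z)"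
  and imp_compose: "le (mult (imp x y) (imp y z)) (imp x z)"
  using DLCMI unfolding DLCMI_def by auto

lemma meet_idem: "meet x x = x"
  by (metis meet_join_absorb join_meet_absorb)

lemma le_iff_join: "le x y \<longleftrightarrow> join x y = y"
  unfolding lat_le_def by (metis meet_join_absorb join_meet_absorb meet_commute join_commute)

sublocale L: distrib_lattice meet le "\<lambda>x y. le x y \<and> \<not> le y x" join
proof
  fix x y z
  show "le x x" by (simp add: lat_le_def meet_idem)
  show "le x y \<Longrightarrow> le y z \<Longrightarrow> le x z" unfolding lat_le_def by (metis meet_assoc)
  show "le x y \<Longrightarrow> le y x \<Longrightarrow> x = y" unfolding lat_le_def by (metis meet_commute)
  show "le (meet x y) x" unfolding lat_le_def by (metis meet_assoc meet_commute meet_idem)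
  show "le (meet x y) y" unfolding lat_le_def by (metis meet_assoc meet_idem)
  show "le x y \<Longrightarrow> le x z \<Longrightarrow> le x (meet y z)" unfolding lat_le_def by (metis meet_assoc)
  show "le x (join x y)" unfolding lat_le_def by (metis meet_join_absorb)
  show "le y (join x y)" unfolding lat_le_def by (metis meet_join_absorb join_commute)
  show "le y x \<Longrightarrow> le z x \<Longrightarrow> le (join y z) x" unfolding le_iff_join by (metis join_assoc)
  show "join x (meet y z) = meet (join x y) (join x z)"
    by (metis meet_join_absorb join_meet_absorb meet_join_distrib join_assoc join_commute
        meet_assoc meet_commute)
qed simp

sublocale M: comm_monoid mult one
proof
  fix x y z
  show "mult (mult x y) z = mult x (mult y z)" by (rule mult_assoc)
  show "mult x y = mult y x" by (rule mult_commute)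
  show "mult x one = x" by (rule mult_one)
qed

lemma mult_join_distrib_left: "mult z (join x y) = join (mult z x) (mult z y)"
  by (simp add: mult_join_distrib M.commute[of z])

lemma mult_mono_transft: "le x y \<Longrightarrow> le (mult x z) (mult y z)"
  unfolding le_iff_join by (simp add: mult_join_distrib[symmetric])

lemma mult_mono: "le x y \<Longrightarrow> le u v \<Longrightarrow> le (mult x u) (mult y v)"
  using mult_mono_transft[of x y u] mult_mono_transft[of u v y]
  by (simp add: M.commute[of _ y] L.order_trans)

lemma mult_le_left: "le (mult x y) x"
  using mult_mono[OF L.order_refl le_one, of x y] by simp

lemma mult_le_right: "le (mult x y) y"
  using mult_le_left[of y x] by (simp add: M.commute)

lemma mult_le_chain: "le (mult s x) y \<Longrightarrow> le (mult u y) z \<Longrightarrow> le (mult (mult s u) x) z"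
  using mult_mono[OF L.order_refl, of "mult s x" y u]
  by (simp add: M.assoc M.left_commute[of s u] L.order_trans)

lemma mult_mono_trans: "le s t \<Longrightarrow> le x y \<Longrightarrow> le (mult t y) z \<Longrightarrow> le (mult s x) z"
  using mult_mono L.order_trans by blast

lemma imp_mono_right: "le y z \<Longrightarrow> le (imp x y) (imp x z)"
  unfolding lat_le_def by (metis imp_meet)

lemma imp_antimono_left: "le x y \<Longrightarrow> le (imp y z) (imp x z)"
  by (metis imp_join le_iff_join join_commute lat_le_def)

definition transfers :: "'a \<Rightarrow> 'a \<Rightarrow> 'a \<Rightarrow> 'a \<Rightarrow> 'a \<Rightarrow> bool" where
  "transfers t p q c d \<longleftrightarrow>
     le (mult t (meet c p)) (meet d p) \<and> le (mult t (join c q)) (join d q) \<and> le t (imp c d)"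

definition equates :: "'a \<Rightarrow> 'a \<Rightarrow> 'a \<Rightarrow> 'a \<Rightarrow> 'a \<Rightarrow> bool" where
  "equates t p q c d \<longleftrightarrow> transfers t p q c d \<and> transfers t p q d c"

lemma transfers_antimono: "transfers t p q c d \<Longrightarrow> le s t \<Longrightarrow> transfers s p q c d"
  unfolding transfers_def by (meson L.order_trans mult_mono_transft)

lemma transfers_refl: "transfers one p q c c"
  unfolding transfers_def by (simp add: imp_self)

lemma transfers_trans:
  assumes "transfers s p q c d" and "transfers u p q d e"
  shows "transfers (mult s u) p q c e"
proof -
  from assms have s: "le (mult s (meet c p)) (meet d p)" "le (mult s (join c q)) (join d q)"
      "le s (imp c d)"
    and u: "le (mult u (meet d p)) (meet e p)" "le (mult u (join d q)) (join e q)"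
      "le u (imp d e)"
    unfolding transfers_def by auto
  have "le (mult s u) (imp c e)"
    using mult_mono[OF s(3) u(3)] imp_compose by (rule L.order_trans)
  with mult_le_chain[OF s(1) u(1)] mult_le_chain[OF s(2) u(2)] show ?thesis
    unfolding transfers_def by blast
qed

lemma transfers_meet:
  assumes "transfers s p q c d" and "transfers u p q c' d'"
  shows "transfers (mult s u) p q (meet c c') (meet d d')"
proof -
  from assms have s: "le (mult s (meet c p)) (meet d p)" "le (mult s (join c q)) (join d q)"
      "le s (imp c d)"
    and u: "le (mult u (meet c' p)) (meet d' p)" "le (mult u (join c' q)) (join d' q)"
      "le u (imp c' d')"
    unfolding transfers_def by auto
  have "le (mult (mult s u) (meet (meet c c') p)) (meet d p)"
    by (rule mult_mono_trans[OF mult_le_left _ s(1)]) (simp add: L.le_infI1)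
  moreover have "le (mult (mult s u) (meet (meet c c') p)) (meet d' p)"
    by (rule mult_mono_trans[OF mult_le_right _ u(1)]) (simp add: L.le_infI1)
  moreover have "le (mult (mult s u) (join (meet c c') q)) (join d q)"
    by (rule mult_mono_trans[OF mult_le_left _ s(2)]) (simp add: L.le_supI1)
  moreover have "le (mult (mult s u) (join (meet c c') q)) (join d' q)"
    by (rule mult_mono_trans[OF mult_le_right _ u(2)]) (simp add: L.le_supI1)
  moreover have "le (mult s u) (imp (meet c c') d)"
    using L.order_trans[OF mult_le_left s(3)] imp_antimono_left[OF L.inf_le1]
    by (rule L.order_trans)
  moreover have "le (mult s u) (imp (meet c c') d')"
    using L.order_trans[OF mult_le_right u(3)] imp_antimono_left[OF L.inf_le2]
    by (rule L.order_trans)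
  moreover have "join (meet d d') q = meet (join d q) (join d' q)"
    by (rule L.sup_inf_distrib2)
  ultimately show ?thesis
    unfolding transfers_def imp_meet[symmetric] by simp
qed

lemma transfers_join:
  assumes "transfers s p q c d" and "transfers u p q c' d'"
  shows "transfers (mult s u) p q (join c c') (join d d')"
proof -
  from assms have s: "le (mult s (meet c p)) (meet d p)" "le (mult s (join c q)) (join d q)"
      "le s (imp c d)"
    and u: "le (mult u (meet c' p)) (meet d' p)" "le (mult u (join c' q)) (join d' q)"
      "le u (imp c' d')"
    unfolding transfers_def by auto
  have "le (mult (mult s u) (meet c p)) (meet (join d d') p)"
    by (rule mult_mono_trans[OF mult_le_left L.order_refl
          L.order_trans[OF s(1) L.inf_mono[OF L.sup_ge1 L.order_refl]]])
  moreover have "le (mult (mult s u) (meet c' p)) (meet (join d d') p)"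
    by (rule mult_mono_trans[OF mult_le_right L.order_refl
          L.order_trans[OF u(1) L.inf_mono[OF L.sup_ge2 L.order_refl]]])
  moreover have "le (mult (mult s u) (join c q)) (join (join d d') q)"
    by (rule mult_mono_trans[OF mult_le_left L.order_refl
          L.order_trans[OF s(2) L.sup_mono[OF L.sup_ge1 L.order_refl]]])
  moreover have "le (mult (mult s u) (join c' q)) (join (join d d') q)"
    by (rule mult_mono_trans[OF mult_le_right L.order_refl
          L.order_trans[OF u(2) L.sup_mono[OF L.sup_ge2 L.order_refl]]])
  moreover have "le (mult s u) (imp c (join d d'))"
    using L.order_trans[OF mult_le_left s(3)] imp_mono_right[OF L.sup_ge1]
    by (rule L.order_trans)
  moreover have "le (mult s u) (imp c' (join d d'))"
    using L.order_trans[OF mult_le_right u(3)] imp_mono_right[OF L.sup_ge2]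
    by (rule L.order_trans)
  moreover have "meet (join c c') p = join (meet c p) (meet c' p)"
    and "join (join c c') q = join (join c q) (join c' q)"
    by (simp_all add: L.inf_sup_distrib2 L.sup_aci)
  ultimately show ?thesis
    unfolding transfers_def imp_join[symmetric] by (simp add: mult_join_distrib_left)
qed

lemma equates_antimono: "equates t p q c d \<Longrightarrow> le s t \<Longrightarrow> equates s p q c d"
  unfolding equates_def using transfers_antimono by blast

lemma equates_trans: "equates s p q c d \<Longrightarrow> equates u p q d e \<Longrightarrow> equates (mult s u) p q c e"
  unfolding equates_def using transfers_trans M.commute by metis

lemma equates_meet:
  "equates s p q c d \<Longrightarrow> equates u p q c' d' \<Longrightarrow> equates (mult s u) p q (meet c c') (meet d d')"
  unfolding equates_def using transfers_meet by blast

lemma equates_join: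
  "equates s p q c d \<Longrightarrow> equates u p q c' d' \<Longrightarrow> equates (mult s u) p q (join c c') (join d d')"
  unfolding equates_def using transfers_join by blast

definition equated_by :: "'a set \<Rightarrow> 'a \<Rightarrow> 'a \<Rightarrow> ('a \<times> 'a) set" where
  "equated_by F p q = {(c, d). \<exists>t\<in>F. equates t p q c d}"

lemma lattice_congruence_equated_by:
  assumes one: "one \<in> F"
    and directed: "\<And>s u. s \<in> F \<Longrightarrow> u \<in> F \<Longrightarrow> \<exists>w\<in>F. le w (mult s u)"
  shows "lattice_congruence meet join (equated_by F p q)"
proof -
  have combine: "(x, y) \<in> equated_by F p q"
    if cd: "(c, d) \<in> equated_by F p q" and cd': "(c', d') \<in> equated_by F p q"
      and combined: "\<And>s u. equates s p q c d \<Longrightarrow> equates u p q c' d' \<Longrightarrow> equates (mult s u) p q x y"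
    for c d c' d' x y
  proof -
    obtain s u where "s \<in> F" "u \<in> F" and "equates (mult s u) p q x y"
      using cd cd' combined unfolding equated_by_def by blast
    moreover obtain w where "w \<in> F" and "le w (mult s u)"
      using directed calculation(1,2) by blast
    ultimately show ?thesis
      unfolding equated_by_def using equates_antimono by blast
  qed
  have "equiv UNIV (equated_by F p q)"
  proof (intro equivI refl_onI symI transI)
    show "(c, c) \<in> equated_by F p q" for c
      using one transfers_refl unfolding equated_by_def equates_def by blast
    show "(d, c) \<in> equated_by F p q" if "(c, d) \<in> equated_by F p q" for c d
      using that unfolding equated_by_def equates_def by blast
    show "(c, e) \<in> equated_by F p q"
      if "(c, d) \<in> equated_by F p q" and "(d, e) \<in> equated_by F p q" for c d e
      using that equates_trans by (rule combine)
  qed simp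
  moreover have "(meet c c', meet d d') \<in> equated_by F p q"
    and "(join c c', join d d') \<in> equated_by F p q"
    if "(c, d) \<in> equated_by F p q" and "(c', d') \<in> equated_by F p q" for c d c' d'
    using that equates_meet equates_join by (blast intro: combine)+
  ultimately show ?thesis
    unfolding lattice_congruence_def by blast
qed

lemma equates_biimp: "equates (biimp meet imp c d) (meet c d) (join c d) c d"
proof -
  have "meet c (meet c d) = meet c d" and "meet d (meet c d) = meet c d"
    and "join c (join c d) = join c d" and "join d (join c d) = join c d"
    by (simp_all add: L.inf_absorb2 L.sup_absorb2)
  then show ?thesis
    unfolding equates_def transfers_def biimp_def
    by (simp only:) (blast intro: mult_le_right L.inf_le1 L.inf_le2)
qed

lemma tn_antimono: "m \<le> n \<Longrightarrow> le (tn meet imp one n a b) (tn meet imp one m a b)"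
proof (induction n)
  case (Suc n)
  then show ?case
    by (cases "m = Suc n") (simp_all add: L.le_infI1)
qed simp

lemma mpow_mono: "le x y \<Longrightarrow> le (mpow mult one x k) (mpow mult one y k)"
  by (induction k) (simp_all add: mult_mono)

lemma mpow_add: "mpow mult one x (k + l) = mult (mpow mult one x k) (mpow mult one x l)"
  by (induction k) (simp_all add: M.assoc)

lemma tnk_le_mult: "le (tnk meet mult imp one (max n m) (k + l) a b)
                      (mult (tnk meet mult imp one n k a b) (tnk meet mult imp one m l a b))"
  unfolding tnk_def mpow_add by (intro mult_mono mpow_mono tn_antimono) simp_all

lemma Rrel_eq_equated_by:
  "Rrel meet join mult imp one a b =
     equated_by {tnk meet mult imp one n k a b | n k. True} (meet a b) (join a b)"
  unfolding Rrel_def equated_by_def equates_def transfers_def biimp_def Let_def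
  by auto

end

theorem lemma3p6:
  fixes meet join mult imp :: "'a \<Rightarrow> 'a \<Rightarrow> 'a" and one :: 'a and a b :: 'a
  assumes "DLCMI meet join mult imp one"
  shows "(a, b) \<in> Rrel meet join mult imp one a b \<and>
         lattice_congruence meet join (Rrel meet join mult imp one a b)"
proof -
  interpret dlcmi meet join mult imp one
    using assms by (rule dlcmi.intro)
  let ?F = "{tnk meet mult imp one n k a b | n k. True}"
  have "equates (tnk meet mult imp one 0 1 a b) (meet a b) (join a b) a b"
    by (simp add: tnk_def mult_one equates_biimp)
  then have "(a, b) \<in> equated_by ?F (meet a b) (join a b)"
    unfolding equated_by_def by blast
  moreover have "one = tnk meet mult imp one 0 0 a b"
    by (simp add: tnk_def)
  then have "lattice_congruence meet join (equated_by ?F (meet a b) (join a b))"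
    by (intro lattice_congruence_equated_by) (auto intro!: tnk_le_mult)
  ultimately show ?thesis
    unfolding Rrel_eq_equated_by by blast
qed

end
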